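(* Let $n\ge 2$ and let $\mathcal{F}$ be a maximal coclique of $\Gamma_{2n}$. Let $B$ be an $n$-space of $\mathrm{PG}(2n,q)$ that occurs in a flag of $\mathcal{F}$. Then there exists $k\in\{1,\ldots,n+1\}$ such that the number of flags in $\mathcal{F}$ that contain $B$ is precisely $\begin{bmatrix}k\\ 1\end{bmatrix}_q$. Furthermore, this number is $\begin{bmatrix}n+1\\ 1\end{bmatrix}_q$ if and only if every flag $(A',B')\in \mathcal{F}$ satisfies $A'\cap B\neq \emptyset$.
   Context: $\mathrm{PG}(2n,q)$ is the projective space of projective dimension $2n$ over the field of order $q$; an $i$-space is a subspace of projective dimension $i$. An $(n-1,n)$-flag is a pair $(A,B)$ with $A$ an $(n-1)$-space, $B$ an $n$-space and $A\subseteq B$; it "contains" $B$ if its $n$-space is $B$. Two such flags $(A_1,B_1),(A_2,B_2)$ are opposite if $A_1\cap B_2=A_2\cap B_1=\emptyset$. $\Gamma_{2n}$ is the graph whose vertices are the $(n-1,n)$-flags, adjacent when opposite; a maximal coclique is an inclusion-maximal set of pairwise non-opposite flags. $\begin{bmatrix}k\\ 1\end{bmatrix}_q=\frac{q^k-1}{q-1}$. *)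

theory Defs
  imports "HOL-Analysis.Analysis"
begin

text \<open>PG(2n,q) is modelled by the vector space 'a^'d with 'a a finite field of
order q and CARD('d) = 2n+1. A projective i-space is a linear subspace of
vector dimension i+1; projective subspaces are disjoint iff the linear
subspaces meet only in 0.\<close>

definition proj_space :: "nat \<Rightarrow> ('a::field ^ 'd) set \<Rightarrow> bool" where
  "proj_space i U \<longleftrightarrow> vec.subspace U \<and> vec.dim U = i + 1"

definition flags :: "nat \<Rightarrow> ((('a::field ^ 'd) set) \<times> (('a ^ 'd) set)) set" where
  "flags n = {(A, B). proj_space (n - 1) A \<and> proj_space n B \<and> A \<subseteq> B}"

definition opposite :: "(('a::field ^ 'd) set \<times> ('a ^ 'd) set) \<Rightarrow> (('a ^ 'd) set \<times> ('a ^ 'd) set) \<Rightarrow> bool" where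
  "opposite f g \<longleftrightarrow> fst f \<inter> snd g = {0} \<and> fst g \<inter> snd f = {0}"

definition coclique :: "nat \<Rightarrow> (('a::field ^ 'd) set \<times> ('a ^ 'd) set) set \<Rightarrow> bool" where
  "coclique n F \<longleftrightarrow> F \<subseteq> flags n \<and> (\<forall>f\<in>F. \<forall>g\<in>F. \<not> opposite f g)"

definition maximal_coclique :: "nat \<Rightarrow> (('a::field ^ 'd) set \<times> ('a ^ 'd) set) set \<Rightarrow> bool" where
  "maximal_coclique n F \<longleftrightarrow> coclique n F \<and> (\<forall>G. coclique n G \<and> F \<subseteq> G \<longrightarrow> G = F)"

definition gauss1 :: "nat \<Rightarrow> nat \<Rightarrow> nat" where
  "gauss1 q k = (q ^ k - 1) div (q - 1)"

end

theory Submission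
  imports Defs
begin

text \<open>Call a flag (A', B') of the coclique F skew to B if A' \<inter> B = 0. For a skew flag,
  B \<inter> B' is at most a point (A' is a hyperplane of B' missing B), and since (A', B') is not
  opposite to a flag (A, B) of F, that point lies in A. Conversely, any two n-spaces of
  PG(2n, q) meet, so maximality puts every hyperplane A of B through all these points into F.
  Hence the flags of F through B are the (A, B) with A a hyperplane of B containing the span W
  of these points, and there are [n + 1 - dim W]_q of them, counted by double counting. This
  equals [n + 1]_q iff W = 0, i.e. iff no flag of F is skew to B.\<close>

text \<open>No hypothesis on q: for q \<le> 1 both sides are 0 by truncated subtraction and x div 0 = 0.\<close>

lemma gauss1_mult: "gauss1 q k * (q - 1) = q ^ k - 1"
proof (cases "q = 0")
  case True
  then show ?thesis by (simp add: gauss1_def power_0_left)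
next
  case False
  have "int (q - 1) dvd int (q ^ k - 1)"
    using power_diff_1_eq[of "int q" k] False by (simp add: of_nat_diff)
  then show ?thesis
    unfolding gauss1_def by (simp only: int_dvd_int_iff dvd_div_mult_self)
qed

lemma gauss1_0 [simp]: "gauss1 q 0 = 0"
  by (simp add: gauss1_def)

lemma gauss1_inject:
  assumes "q \<ge> 2"
  shows "gauss1 q a = gauss1 q b \<longleftrightarrow> a = b"
proof
  assume "gauss1 q a = gauss1 q b"
  then have "q ^ a - 1 = q ^ b - 1"
    using gauss1_mult[of q a] gauss1_mult[of q b] by simp
  moreover have "1 \<le> q ^ a" "1 \<le> q ^ b"
    using assms by simp_all
  ultimately have "q ^ a = q ^ b"
    by simp
  then show "a = b"
    using assms by (simp add: power_inject_exp)
qed simp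

lemma two_le_card_field: "CARD('a::{field,finite}) \<ge> 2"
proof -
  have "card {0::'a, 1} \<le> CARD('a)"
    by (rule card_mono) auto
  then show ?thesis by simp
qed

lemma sum_card_inter_eq_sum_card:
  assumes "finite H" "finite S"
  shows "(\<Sum>A\<in>H. card (A \<inter> S)) = (\<Sum>x\<in>S. card {A \<in> H. x \<in> A})"
proof -
  have "(\<Sum>A\<in>H. card (A \<inter> S)) = (\<Sum>A\<in>H. \<Sum>x\<in>S. if x \<in> A then 1 else 0)"
  proof (rule sum.cong)
    fix A
    show "card (A \<inter> S) = (\<Sum>x\<in>S. if x \<in> A then 1 else 0)"
      using assms(2) by (simp add: sum.If_cases Int_commute)
  qed simp
  also have "\<dots> = (\<Sum>x\<in>S. \<Sum>A\<in>H. if x \<in> A then 1 else 0)"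
    by (rule sum.swap)
  also have "\<dots> = (\<Sum>x\<in>S. card {A \<in> H. x \<in> A})"
    using assms(1) by (simp add: sum.If_cases Int_def)
  finally show ?thesis .
qed

lemma eq_gauss1_of_recurrence:
  assumes "q \<ge> 2" "k \<ge> 2"
    and "N * (q ^ (k - 1) - 1) = (q ^ k - 1) * gauss1 q (k - 1)"
  shows "N = gauss1 q k"
proof -
  have "N * (q - 1) * (q ^ (k - 1) - 1) = (q ^ k - 1) * (q ^ (k - 1) - 1)"
    using assms(3) gauss1_mult[of q "k - 1"] by (metis mult.commute mult.left_commute)
  moreover have "q ^ (k - 1) - 1 > 0"
    using assms(1,2) one_less_power[of q "k - 1"] by simp
  ultimately have "N * (q - 1) = gauss1 q k * (q - 1)"
    using gauss1_mult[of q k] by simp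
  then show ?thesis
    using assms(1) by simp
qed

lemma card_subspace:
  fixes U :: "('a::{field,finite} ^ 'd) set"
  assumes "vec.subspace U"
  shows "card U = CARD('a) ^ vec.dim U"
proof -
  obtain Bs where Bs: "Bs \<subseteq> U" "vec.independent Bs" "U \<subseteq> vec.span Bs" "card Bs = vec.dim U"
    using vec.basis_exists[of U] by blast
  have fin: "finite Bs"
    using Bs(2) vec.finiteI_independent by blast
  have span: "vec.span Bs = U"
    using vec.span_subspace[OF Bs(1,3) assms] .
  define coords where "coords g = (\<Sum>v\<in>Bs. g v *s v)" for g :: "'a ^ 'd \<Rightarrow> 'a"
  have "inj_on coords (Bs \<rightarrow>\<^sub>E UNIV)"
  proof (rule inj_onI)
    fix g g' assume g: "g \<in> Bs \<rightarrow>\<^sub>E UNIV" and g': "g' \<in> Bs \<rightarrow>\<^sub>E UNIV"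
      and "coords g = coords g'"
    then have "(\<Sum>v\<in>Bs. (g v - g' v) *s v) = 0"
      by (simp add: coords_def vec.scale_left_diff_distrib sum_subtractf)
    then have "\<forall>v\<in>Bs. g v - g' v = 0"
      using Bs(2) unfolding vec.independent_explicit by metis
    then show "g = g'"
      using g g' by (auto simp: PiE_def extensional_def fun_eq_iff)
  qed
  moreover have "coords ` (Bs \<rightarrow>\<^sub>E UNIV) = U"
  proof
    show "coords ` (Bs \<rightarrow>\<^sub>E UNIV) \<subseteq> U"
      using vec.span_finite[OF fin] span by (auto simp: coords_def)
  next
    show "U \<subseteq> coords ` (Bs \<rightarrow>\<^sub>E UNIV)"
    proof
      fix x assume "x \<in> U"
      then obtain u where u: "x = (\<Sum>v\<in>Bs. u v *s v)"
        using vec.span_finite[OF fin] span by auto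
      have "x = coords (restrict u Bs)"
        unfolding u coords_def by (intro sum.cong) auto
      then show "x \<in> coords ` (Bs \<rightarrow>\<^sub>E UNIV)" by auto
    qed
  qed
  ultimately have "card U = card (Bs \<rightarrow>\<^sub>E (UNIV :: 'a set))"
    using card_image by fastforce
  also have "\<dots> = CARD('a) ^ vec.dim U"
    using card_PiE[OF fin, of "\<lambda>_. UNIV :: 'a set"] Bs(4) by simp
  finally show ?thesis .
qed

lemma card_diff_subspace:
  fixes U W :: "('a::{field,finite} ^ 'd) set"
  assumes "vec.subspace W" "vec.subspace U" "W \<subseteq> U"
  shows "card (U - W) = CARD('a) ^ vec.dim W * (CARD('a) ^ (vec.dim U - vec.dim W) - 1)"
proof -
  have "vec.dim W \<le> vec.dim U"
    using vec.dim_subset[OF assms(3)] .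
  then have "CARD('a) ^ vec.dim U = CARD('a) ^ vec.dim W * CARD('a) ^ (vec.dim U - vec.dim W)"
    by (simp add: power_add[symmetric])
  then show ?thesis
    using card_Diff_subset[OF _ assms(3)] card_subspace[OF assms(1)] card_subspace[OF assms(2)]
    by (simp add: diff_mult_distrib2)
qed

definition hyperplanes_between :: "('a::field ^ 'd) set \<Rightarrow> ('a ^ 'd) set \<Rightarrow> ('a ^ 'd) set set" where
  "hyperplanes_between W B =
    {A. vec.subspace A \<and> vec.dim A + 1 = vec.dim B \<and> W \<subseteq> A \<and> A \<subseteq> B}"

lemma hyperplanes_between_through:
  "{A \<in> hyperplanes_between W B. x \<in> A} = hyperplanes_between (vec.span (insert x W)) B"
proof -
  have "W \<subseteq> A \<and> x \<in> A \<longleftrightarrow> vec.span (insert x W) \<subseteq> A" if "vec.subspace A" for A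
    using that vec.span_minimal vec.span_superset by (metis insert_subset order_trans)
  then show ?thesis
    unfolding hyperplanes_between_def by auto
qed

lemma card_hyperplanes_between_step:
  fixes W B :: "('a::{field,finite} ^ 'd) set"
  defines "k \<equiv> vec.dim B - vec.dim W"
  assumes "vec.subspace W" "vec.subspace B" "W \<subseteq> B" "k \<ge> 2"
    and through: "\<And>x. x \<in> B - W \<Longrightarrow>
      card (hyperplanes_between (vec.span (insert x W)) B) = gauss1 CARD('a) (k - 1)"
  shows "card (hyperplanes_between W B) = gauss1 CARD('a) k"
proof -
  define q where "q = CARD('a)"
  define H where "H = hyperplanes_between W B"
  have q2: "q \<ge> 2"
    unfolding q_def by (rule two_le_card_field)
  text \<open>Double count the pairs (A, x) with A \<in> H and x \<in> A - W.\<close>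
  have hyperplane: "card (A \<inter> (B - W)) = q ^ vec.dim W * (q ^ (k - 1) - 1)" if "A \<in> H" for A
  proof -
    have A: "vec.subspace A" "vec.dim A + 1 = vec.dim B" "W \<subseteq> A" "A \<subseteq> B"
      using that by (auto simp: H_def hyperplanes_between_def)
    then have "A \<inter> (B - W) = A - W" by blast
    then show ?thesis
      using card_diff_subspace[OF assms(2) A(1,3)] A(2)[symmetric] by (simp add: q_def k_def)
  qed
  have "card H * (q ^ vec.dim W * (q ^ (k - 1) - 1)) = (\<Sum>A\<in>H. card (A \<inter> (B - W)))"
    using hyperplane by simp
  also have "\<dots> = (\<Sum>x\<in>B - W. card {A \<in> H. x \<in> A})"
    by (rule sum_card_inter_eq_sum_card) (simp_all add: H_def)
  also have "\<dots> = q ^ vec.dim W * (q ^ k - 1) * gauss1 q (k - 1)"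
    using through card_diff_subspace[OF assms(2-4)]
    by (simp add: H_def hyperplanes_between_through q_def k_def)
  finally have "card H * (q ^ (k - 1) - 1) = (q ^ k - 1) * gauss1 q (k - 1)"
    using q2 by (simp add: ac_simps)
  then show ?thesis
    using eq_gauss1_of_recurrence[OF q2 assms(5)] by (simp add: H_def q_def)
qed

lemma card_hyperplanes_between:
  fixes W B :: "('a::{field,finite} ^ 'd) set"
  assumes "vec.subspace W" "vec.subspace B" "W \<subseteq> B"
  shows "card (hyperplanes_between W B) = gauss1 CARD('a) (vec.dim B - vec.dim W)"
  using assms
proof (induction "vec.dim B - vec.dim W" arbitrary: W rule: less_induct)
  case less
  have WB: "vec.dim W \<le> vec.dim B"
    using vec.dim_subset[OF less.prems(3)] .
  consider "vec.dim B - vec.dim W = 0" | "vec.dim B - vec.dim W = 1"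
    | "vec.dim B - vec.dim W \<ge> 2"
    by linarith
  then show ?case
  proof cases
    case 1
    then have "W = B"
      using vec.subspace_dim_equal[OF less.prems] by simp
    then have "hyperplanes_between W B = {}"
      using vec.subspace_dim_equal by (fastforce simp: hyperplanes_between_def)
    then show ?thesis using 1 by simp
  next
    case 2
    have "hyperplanes_between W B = {W}"
      using vec.subspace_dim_equal[OF less.prems(1)] less.prems 2 WB
      by (fastforce simp: hyperplanes_between_def)
    then show ?thesis
      using 2 two_le_card_field[where 'a='a] by (simp add: gauss1_def)
  next
    case 3
    show ?thesis
    proof (rule card_hyperplanes_between_step[OF less.prems 3])
      fix x assume x: "x \<in> B - W"
      let ?W' = "vec.span (insert x W)"
      have "x \<notin> vec.span W"
        using x vec.span_eq_iff less.prems(1) by blast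
      then have "vec.dim ?W' = vec.dim W + 1"
        by (simp add: vec.dim_insert)
      moreover have "?W' \<subseteq> B"
        using x less.prems vec.span_minimal by (metis DiffD1 insert_subset)
      ultimately show "card (hyperplanes_between ?W' B) = gauss1 CARD('a) (vec.dim B - vec.dim W - 1)"
        using less.hyps[of ?W'] 3 less.prems(2) by simp
    qed
  qed
qed

lemma subspaces_meet:
  fixes U V :: "('a::field ^ 'd) set"
  assumes "vec.subspace U" "vec.subspace V" "CARD('d) < vec.dim U + vec.dim V"
  shows "\<exists>x\<in>U \<inter> V. x \<noteq> 0"
proof -
  have "vec.dim {x + y |x y. x \<in> U \<and> y \<in> V} \<le> CARD('d)"
    using dim_subset_UNIV_cart_gen[of "{x + y |x y. x \<in> U \<and> y \<in> V}"] .
  then have "vec.dim (U \<inter> V) \<noteq> 0"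
    using vec.dim_sums_Int[OF assms(1,2)] assms(3) by linarith
  then show ?thesis by auto
qed

lemma proj_spaces_meet:
  fixes B B' :: "('a::field ^ 'd) set"
  assumes "CARD('d) = 2 * n + 1" "proj_space n B" "proj_space n B'"
  shows "\<exists>x\<in>B \<inter> B'. x \<noteq> 0"
  using assms subspaces_meet[of B B'] by (simp add: proj_space_def)

lemma dim_add_dim_le_of_inter_zero:
  fixes U V T :: "('a::field ^ 'd) set"
  assumes "vec.subspace U" "vec.subspace V" "vec.subspace T" "U \<subseteq> T" "V \<subseteq> T"
    and "U \<inter> V = {0}"
  shows "vec.dim U + vec.dim V \<le> vec.dim T"
proof -
  have "{x + y |x y. x \<in> U \<and> y \<in> V} \<subseteq> T"
    using assms(4,5) vec.subspace_add[OF assms(3)] by blast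
  then have "vec.dim {x + y |x y. x \<in> U \<and> y \<in> V} \<le> vec.dim T"
    by (rule vec.dim_subset)
  then show ?thesis
    using vec.dim_sums_Int[OF assms(1,2)] assms(6) by simp
qed

lemma opposite_sym: "opposite f g \<longleftrightarrow> opposite g f"
  by (auto simp: opposite_def)

lemma skew_flag_meet_subset:
  assumes "(A, B) \<in> flags n" "(A', B') \<in> flags n" "\<not> opposite (A, B) (A', B')"
    and "A' \<inter> B = {0}"
  shows "B \<inter> B' \<subseteq> A"
proof -
  have A: "vec.subspace A" "A \<subseteq> B" and B: "vec.subspace B"
    using assms(1) by (auto simp: flags_def proj_space_def)
  have A': "vec.subspace A'" "vec.dim A' = n - 1 + 1" "A' \<subseteq> B'"
    and B': "vec.subspace B'" "vec.dim B' = n + 1"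
    using assms(2) by (auto simp: flags_def proj_space_def)
  have meet: "vec.subspace (B \<inter> B')" "vec.subspace (A \<inter> B')"
    using A(1) B B'(1) by (simp_all add: vec.subspace_inter)
  have "A' \<inter> (B \<inter> B') = {0}"
    using assms(4) meet(1) vec.subspace_0 by blast
  then have "vec.dim A' + vec.dim (B \<inter> B') \<le> vec.dim B'"
    using dim_add_dim_le_of_inter_zero[OF A'(1) meet(1) B'(1) A'(3)] by blast
  then have "vec.dim (B \<inter> B') \<le> 1"
    using A'(2) B'(2) by linarith
  moreover have "A \<inter> B' \<noteq> {0}"
    using assms(3,4) by (simp add: opposite_def)
  then have "vec.dim (A \<inter> B') \<noteq> 0"
    using meet(2) vec.subspace_0 by auto
  ultimately have "vec.dim (B \<inter> B') \<le> vec.dim (A \<inter> B')"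
    by linarith
  then have "A \<inter> B' = B \<inter> B'"
    using vec.subspace_dim_equal[OF meet(2,1)] A(2) by blast
  then show ?thesis by blast
qed

definition skew_span ::
    "(('a::field ^ 'd) set \<times> ('a ^ 'd) set) set \<Rightarrow> ('a ^ 'd) set \<Rightarrow> ('a ^ 'd) set" where
  "skew_span F B = vec.span (\<Union>{B \<inter> B' | A' B'. (A', B') \<in> F \<and> A' \<inter> B = {0}})"

lemma skew_span_subset:
  assumes "coclique n F" "(A, B) \<in> F"
  shows "skew_span F B \<subseteq> A"
proof -
  have "vec.subspace A"
    using assms unfolding coclique_def flags_def proj_space_def by blast
  moreover have "B \<inter> B' \<subseteq> A" if "(A', B') \<in> F" "A' \<inter> B = {0}" for A' B'
    using assms that skew_flag_meet_subset unfolding coclique_def by blast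
  ultimately show ?thesis
    unfolding skew_span_def by (intro vec.span_minimal) auto
qed

lemma maximal_coclique_memI:
  fixes F :: "(('a::field ^ 'd) set \<times> ('a ^ 'd) set) set"
  assumes "maximal_coclique n F" "CARD('d) = 2 * n + 1" "n \<ge> 1"
    and flag: "(A, B) \<in> flags n" and "skew_span F B \<subseteq> A"
  shows "(A, B) \<in> F"
proof -
  have F: "F \<subseteq> flags n" "\<And>f g. f \<in> F \<Longrightarrow> g \<in> F \<Longrightarrow> \<not> opposite f g"
    using assms(1) by (auto simp: maximal_coclique_def coclique_def)
  have A: "vec.dim A = n" "A \<subseteq> B"
    using flag assms(3) by (auto simp: flags_def proj_space_def)
  have not_opp: "\<not> opposite (A, B) g" if "g \<in> F" for g
  proof (cases g)
    case (Pair A' B')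
    show ?thesis
    proof (cases "A' \<inter> B = {0}")
      case True
      have "proj_space n B" "proj_space n B'"
        using flag F(1) that Pair by (auto simp: flags_def)
      then obtain x where x: "x \<in> B \<inter> B'" "x \<noteq> 0"
        using proj_spaces_meet assms(2) by blast
      have "B \<inter> B' \<subseteq> skew_span F B"
        unfolding skew_span_def using True that Pair
        by (intro order_trans[OF _ vec.span_superset]) blast
      then have "x \<in> A \<inter> B'"
        using x assms(5) by blast
      then show ?thesis
        using x(2) Pair by (auto simp: opposite_def)
    qed (simp add: Pair opposite_def)
  qed
  have "A \<noteq> {0}"
    using A(1) assms(3) by (metis vec.dim_eq_0 not_one_le_zero order_refl)
  then have "\<not> opposite (A, B) (A, B)"
    using A(2) by (auto simp: opposite_def Int_absorb2)
  then have "coclique n (insert (A, B) F)"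
    using F flag not_opp opposite_sym unfolding coclique_def by (metis insert_iff insert_subset)
  then show ?thesis
    using assms(1) unfolding maximal_coclique_def by blast
qed

lemma flags_through_maximal_coclique:
  fixes F :: "(('a::field ^ 'd) set \<times> ('a ^ 'd) set) set"
  assumes "maximal_coclique n F" "CARD('d) = 2 * n + 1" "n \<ge> 1" "proj_space n B"
  shows "{f \<in> F. snd f = B} = (\<lambda>A. (A, B)) ` hyperplanes_between (skew_span F B) B"
proof -
  have "coclique n F"
    using assms(1) by (simp add: maximal_coclique_def)
  have "(A, B) \<in> F \<longleftrightarrow> A \<in> hyperplanes_between (skew_span F B) B" for A
  proof
    assume "(A, B) \<in> F"
    then show "A \<in> hyperplanes_between (skew_span F B) B"
      using skew_span_subset[OF \<open>coclique n F\<close>] \<open>coclique n F\<close> assms(3)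
      by (auto simp: hyperplanes_between_def coclique_def flags_def proj_space_def)
  next
    assume "A \<in> hyperplanes_between (skew_span F B) B"
    then have "(A, B) \<in> flags n" "skew_span F B \<subseteq> A"
      using assms(3,4) by (auto simp: hyperplanes_between_def flags_def proj_space_def)
    then show "(A, B) \<in> F"
      using maximal_coclique_memI assms(1-3) by blast
  qed
  then show ?thesis by force
qed

lemma card_flags_through_maximal_coclique:
  fixes F :: "(('a::{field,finite} ^ 'd) set \<times> ('a ^ 'd) set) set"
  assumes "maximal_coclique n F" "CARD('d) = 2 * n + 1" "n \<ge> 1" "proj_space n B"
  shows "card {f \<in> F. snd f = B} = gauss1 CARD('a) (n + 1 - vec.dim (skew_span F B))"
proof -
  have B: "vec.subspace B" "vec.dim B = n + 1"
    using assms(4) by (simp_all add: proj_space_def)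
  have "skew_span F B \<subseteq> B"
    unfolding skew_span_def using B(1) by (intro vec.span_minimal) auto
  then have "card (hyperplanes_between (skew_span F B) B)
      = gauss1 CARD('a) (n + 1 - vec.dim (skew_span F B))"
    using card_hyperplanes_between[of "skew_span F B" B] B by (simp add: skew_span_def)
  moreover have "inj_on (\<lambda>A. (A, B)) (hyperplanes_between (skew_span F B) B)"
    by (simp add: inj_on_def)
  ultimately show ?thesis
    using flags_through_maximal_coclique[OF assms] by (simp add: card_image)
qed

lemma dim_skew_span_eq_0_iff:
  assumes "\<And>A' B'. (A', B') \<in> F \<Longrightarrow> \<exists>x\<in>B \<inter> B'. x \<noteq> 0"
  shows "vec.dim (skew_span F B) = 0 \<longleftrightarrow> (\<forall>(A', B')\<in>F. A' \<inter> B \<noteq> {0})"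
proof -
  have "vec.dim (skew_span F B) = 0
      \<longleftrightarrow> \<Union>{B \<inter> B' | A' B'. (A', B') \<in> F \<and> A' \<inter> B = {0}} \<subseteq> {0}"
    by (simp add: skew_span_def vec.dim_span)
  also have "\<dots> \<longleftrightarrow> (\<forall>(A', B')\<in>F. A' \<inter> B \<noteq> {0})"
  proof
    assume trivial: "\<Union>{B \<inter> B' | A' B'. (A', B') \<in> F \<and> A' \<inter> B = {0}} \<subseteq> {0}"
    show "\<forall>(A', B')\<in>F. A' \<inter> B \<noteq> {0}"
    proof clarify
      fix A' B' assume "(A', B') \<in> F" "A' \<inter> B = {0}"
      then have "B \<inter> B' \<subseteq> {0}"
        using trivial by blast
      then show False
        using assms[OF \<open>(A', B') \<in> F\<close>] by blast
    qed
  qed blast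
  finally show ?thesis .
qed

theorem mainTheorem3:
  fixes F :: "(('a::{field,finite} ^ 'd) set \<times> ('a ^ 'd) set) set"
    and n :: nat and B :: "('a ^ 'd) set"
  assumes "n \<ge> 2"
    and "CARD('d) = 2 * n + 1"
    and "maximal_coclique n F"
    and "B \<in> snd ` F"
  shows "(\<exists>k\<in>{1..n+1}. card {f \<in> F. snd f = B} = gauss1 CARD('a) k)
    \<and> (card {f \<in> F. snd f = B} = gauss1 CARD('a) (n + 1)
         \<longleftrightarrow> (\<forall>(A', B')\<in>F. A' \<inter> B \<noteq> {0}))"
proof -
  define k where "k = n + 1 - vec.dim (skew_span F B)"
  obtain A where "(A, B) \<in> F"
    using assms(4) by force
  have flags: "F \<subseteq> flags n"
    using assms(3) by (simp add: maximal_coclique_def coclique_def)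
  then have B: "proj_space n B"
    using \<open>(A, B) \<in> F\<close> by (auto simp: flags_def)
  have count: "card {f \<in> F. snd f = B} = gauss1 CARD('a) k"
    unfolding k_def using card_flags_through_maximal_coclique[OF assms(3,2) _ B] assms(1) by simp
  moreover have "card {f \<in> F. snd f = B} \<noteq> 0"
    using \<open>(A, B) \<in> F\<close> by (auto simp: card_eq_0_iff)
  ultimately have range: "k \<in> {1..n+1}"
    unfolding k_def by (metis gauss1_0 atLeastAtMost_iff diff_le_self less_one not_less)
  have "k = n + 1 \<longleftrightarrow> vec.dim (skew_span F B) = 0"
    unfolding k_def by linarith
  also have "\<dots> \<longleftrightarrow> (\<forall>(A', B')\<in>F. A' \<inter> B \<noteq> {0})"
    using flags proj_spaces_meet[OF assms(2) B]
    by (intro dim_skew_span_eq_0_iff) (auto simp: flags_def)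
  finally have extremal: "k = n + 1 \<longleftrightarrow> (\<forall>(A', B')\<in>F. A' \<inter> B \<noteq> {0})" .
  have "gauss1 CARD('a) k = gauss1 CARD('a) (n + 1) \<longleftrightarrow> k = n + 1"
    by (rule gauss1_inject[OF two_le_card_field])
  then show ?thesis
    using range unfolding count extremal by (intro conjI bexI) simp_all
qed

end
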